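(* Let $F$ be a field. If $M$ and $M'$ are nonzero Puiseux monoids such that $F[M]$ and $F[M']$ are both half-factorial, then $F[M]\cong F[M']\cong F[X]$ as $F$-algebras.
   Context: A Puiseux monoid is an additive submonoid of $(\mathbb{Q}_{\ge 0},+)$. $F[M]$ denotes the semigroup algebra of $M$ over $F$ (finite formal sums $\sum_{s\in M} f(s)X^s$ with $X^sX^t=X^{s+t}$). An integral domain is half-factorial if it is atomic (every nonzero nonunit is a finite product of irreducibles) and any two such factorizations of the same element have the same number of factors. *)

theory Defs
  imports "HOL-Computational_Algebra.Polynomial" "HOL-Algebra.Algebra"
begin

definition puiseux_monoid :: "rat set \<Rightarrow> bool" where
  "puiseux_monoid M \<longleftrightarrow> M \<subseteq> {q. 0 \<le> q} \<and> 0 \<in> M \<and> (\<forall>a\<in>M. \<forall>b\<in>M. a + b \<in> M)"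

definition supp_fun :: "(rat \<Rightarrow> 'a::zero) \<Rightarrow> rat set" where
  "supp_fun f = {s. f s \<noteq> 0}"

(* The semigroup (monoid) algebra F[M]: elements are finitely supported
   f : Q -> F with support in M, standing for sum_{s in M} f(s) X^s;
   multiplication is the convolution induced by X^s X^t = X^(s+t). *)
definition monoid_algebra :: "rat set \<Rightarrow> (rat \<Rightarrow> 'a::field) ring" where
  "monoid_algebra M =
    \<lparr> carrier = {f. finite (supp_fun f) \<and> supp_fun f \<subseteq> M},
      mult = (\<lambda>f g u. \<Sum>s\<in>supp_fun f. f s * g (u - s)),
      one = (\<lambda>s. if s = 0 then 1 else 0),
      ring.zero = (\<lambda>s. 0),
      ring.add = (\<lambda>f g s. f s + g s) \<rparr>"

definition ma_const :: "'a::field \<Rightarrow> (rat \<Rightarrow> 'a)" where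
  "ma_const c = (\<lambda>s. if s = 0 then c else 0)"

definition poly_ring :: "('a::field) poly ring" where
  "poly_ring = \<lparr> carrier = UNIV, mult = (*), one = 1, ring.zero = 0, ring.add = (+) \<rparr>"

definition atomic_domain :: "('a, 'b) ring_scheme \<Rightarrow> bool" where
  "atomic_domain R \<longleftrightarrow> domain R \<and>
     (\<forall>a\<in>carrier R. a \<noteq> \<zero>\<^bsub>R\<^esub> \<and> a \<notin> Units R \<longrightarrow>
        (\<exists>fs. set fs \<subseteq> carrier R \<and> (\<forall>x\<in>set fs. ring_irreducible\<^bsub>R\<^esub> x)
              \<and> foldr (\<otimes>\<^bsub>R\<^esub>) fs \<one>\<^bsub>R\<^esub> = a))"

definition half_factorial :: "('a, 'b) ring_scheme \<Rightarrow> bool" where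
  "half_factorial R \<longleftrightarrow> atomic_domain R \<and>
     (\<forall>fs gs. set fs \<subseteq> carrier R \<and> set gs \<subseteq> carrier R
        \<and> (\<forall>x\<in>set fs. ring_irreducible\<^bsub>R\<^esub> x) \<and> (\<forall>x\<in>set gs. ring_irreducible\<^bsub>R\<^esub> x)
        \<and> foldr (\<otimes>\<^bsub>R\<^esub>) fs \<one>\<^bsub>R\<^esub> = foldr (\<otimes>\<^bsub>R\<^esub>) gs \<one>\<^bsub>R\<^esub>
        \<longrightarrow> length fs = length gs)"

(* Isomorphism of F-algebras: a ring isomorphism that is the identity on F
   (i.e. maps each constant c to the constant c); F-linearity follows. *)
definition alg_iso_MM :: "rat set \<Rightarrow> rat set \<Rightarrow> ((rat \<Rightarrow> 'a::field) \<Rightarrow> (rat \<Rightarrow> 'a)) set" where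
  "alg_iso_MM M M' = {h. h \<in> ring_iso (monoid_algebra M) (monoid_algebra M')
                         \<and> (\<forall>c. h (ma_const c) = ma_const c)}"

definition alg_iso_MX :: "rat set \<Rightarrow> ((rat \<Rightarrow> 'a::field) \<Rightarrow> 'a poly) set" where
  "alg_iso_MX M = {h. h \<in> ring_iso (monoid_algebra M) poly_ring
                         \<and> (\<forall>c. h (ma_const c) = [:c:])}"

end

theory Submission
  imports Defs
begin

text \<open>
  Since \<open>M \<subseteq> \<rat>\<^sub>\<ge>\<^sub>0\<close>, the extreme exponents of a product in \<open>F[M]\<close> are the sums of the
  extreme exponents of the factors. Hence every divisor of a monomial is a monomial, the
  units of \<open>F[M]\<close> are the nonzero constants, and the irreducible monomials are exactly
  the \<open>c X\<^sup>a\<close> with \<open>a\<close> an atom of \<open>M\<close>. Atomicity of \<open>F[M]\<close> then makes \<open>M\<close> generated by its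
  atoms. If \<open>a\<close>, \<open>b\<close> are atoms with \<open>n b = k a\<close>, then \<open>(X\<^sup>a)\<^sup>k = (X\<^sup>b)\<^sup>n\<close>, so half-factoriality
  forces \<open>k = n\<close> and \<open>a = b\<close>. Thus \<open>M = \<nat> a\<close> for a single atom \<open>a\<close>, and
  \<open>X\<^sup>n\<^sup>a \<mapsto> X\<^sup>n\<close> is an isomorphism \<open>F[M] \<cong> F[X]\<close>.
\<close>

definition conv :: "(rat \<Rightarrow> 'a::field) \<Rightarrow> (rat \<Rightarrow> 'a) \<Rightarrow> rat \<Rightarrow> 'a" where
  "conv f g = (\<lambda>u. \<Sum>s\<in>supp_fun f. f s * g (u - s))"

definition ma_monom :: "'a::field \<Rightarrow> rat \<Rightarrow> rat \<Rightarrow> 'a" where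
  "ma_monom c a = (\<lambda>s. if s = a then c else 0)"

definition atom :: "rat set \<Rightarrow> rat \<Rightarrow> bool" where
  "atom M a \<longleftrightarrow> a \<in> M \<and> a \<noteq> 0 \<and> (\<forall>b\<in>M. \<forall>c\<in>M. a = b + c \<longrightarrow> b = 0 \<or> c = 0)"

lemma carrier_monoid_algebra:
  "carrier (monoid_algebra M) = {f. finite (supp_fun f) \<and> supp_fun f \<subseteq> M}"
  by (simp add: monoid_algebra_def)

lemma monoid_algebra_simps:
  "(\<otimes>\<^bsub>monoid_algebra M\<^esub>) = conv"
  "\<one>\<^bsub>monoid_algebra M\<^esub> = ma_monom 1 0"
  "\<zero>\<^bsub>monoid_algebra M\<^esub> = (\<lambda>s. 0)"
  "f \<oplus>\<^bsub>monoid_algebra M\<^esub> g = (\<lambda>s. f s + g s)"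
  by (auto simp: monoid_algebra_def conv_def ma_monom_def fun_eq_iff)

lemma ma_const_eq_ma_monom: "ma_const c = ma_monom c 0"
  by (simp add: ma_const_def ma_monom_def)

lemma supp_ma_monom: "supp_fun (ma_monom c a) = (if c = 0 then {} else {a})"
  by (auto simp: supp_fun_def ma_monom_def)

lemma ma_monom_in_carrier_iff: "ma_monom c a \<in> carrier (monoid_algebra M) \<longleftrightarrow> c = 0 \<or> a \<in> M"
  by (auto simp: carrier_monoid_algebra supp_ma_monom)

lemma ma_monom_eq_iff: "c \<noteq> 0 \<Longrightarrow> ma_monom c a = ma_monom d b \<longleftrightarrow> c = d \<and> a = b"
  by (auto simp: ma_monom_def fun_eq_iff)

lemma conv_ma_monom: "conv (ma_monom c a) (ma_monom d b) = ma_monom (c * d) (a + b)"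
  by (cases "c = 0"; simp add: conv_def supp_ma_monom; auto simp: ma_monom_def fun_eq_iff)

lemma nonneg_of_puiseux_monoid: "puiseux_monoid M \<Longrightarrow> x \<in> M \<Longrightarrow> 0 \<le> x"
  by (auto simp: puiseux_monoid_def)

subsection \<open>Extreme coefficients of a product\<close>

lemma conv_at_unique_sum:
  assumes "finite (supp_fun f)"
    and unique: "\<And>s t. s \<in> supp_fun f \<Longrightarrow> t \<in> supp_fun g \<Longrightarrow> s + t = s\<^sub>0 + t\<^sub>0 \<Longrightarrow> s = s\<^sub>0"
  shows "conv f g (s\<^sub>0 + t\<^sub>0) = f s\<^sub>0 * g t\<^sub>0"
proof -
  have "f s * g (s\<^sub>0 + t\<^sub>0 - s) = (if s = s\<^sub>0 then f s\<^sub>0 * g t\<^sub>0 else 0)" if "s \<in> supp_fun f" for s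
    using unique[OF that, of "s\<^sub>0 + t\<^sub>0 - s"] by (auto simp: supp_fun_def)
  then have "conv f g (s\<^sub>0 + t\<^sub>0) = (\<Sum>s\<in>supp_fun f. if s = s\<^sub>0 then f s\<^sub>0 * g t\<^sub>0 else 0)"
    unfolding conv_def by (rule sum.cong[OF refl])
  also have "\<dots> = f s\<^sub>0 * g t\<^sub>0"
    using assms(1) by (simp add: supp_fun_def)
  finally show ?thesis .
qed

lemma
  assumes "finite (supp_fun f)" "finite (supp_fun g)" "supp_fun f \<noteq> {}" "supp_fun g \<noteq> {}"
  shows conv_Max_Max: "conv f g (Max (supp_fun f) + Max (supp_fun g)) = f (Max (supp_fun f)) * g (Max (supp_fun g))"
    and conv_Min_Min: "conv f g (Min (supp_fun f) + Min (supp_fun g)) = f (Min (supp_fun f)) * g (Min (supp_fun g))"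
proof -
  show "conv f g (Max (supp_fun f) + Max (supp_fun g)) = f (Max (supp_fun f)) * g (Max (supp_fun g))"
  proof (rule conv_at_unique_sum)
    fix s t assume "s \<in> supp_fun f" "t \<in> supp_fun g" "s + t = Max (supp_fun f) + Max (supp_fun g)"
    moreover from calculation have "s \<le> Max (supp_fun f)" "t \<le> Max (supp_fun g)"
      using assms by simp_all
    ultimately show "s = Max (supp_fun f)" by linarith
  qed (fact assms)
  show "conv f g (Min (supp_fun f) + Min (supp_fun g)) = f (Min (supp_fun f)) * g (Min (supp_fun g))"
  proof (rule conv_at_unique_sum)
    fix s t assume "s \<in> supp_fun f" "t \<in> supp_fun g" "s + t = Min (supp_fun f) + Min (supp_fun g)"
    moreover from calculation have "Min (supp_fun f) \<le> s" "Min (supp_fun g) \<le> t"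
      using assms by simp_all
    ultimately show "s = Min (supp_fun f)" by linarith
  qed (fact assms)
qed

lemma eq_ma_monom_if_Min_eq_Max:
  assumes "finite (supp_fun f)" "supp_fun f \<noteq> {}" "Min (supp_fun f) = Max (supp_fun f)"
  shows "f = ma_monom (f (Max (supp_fun f))) (Max (supp_fun f))"
proof -
  have "s = Max (supp_fun f)" if "s \<in> supp_fun f" for s
  proof -
    have "Min (supp_fun f) \<le> s" "s \<le> Max (supp_fun f)" using that assms(1) by auto
    then show ?thesis using assms(3) by simp
  qed
  then show ?thesis by (auto simp: ma_monom_def fun_eq_iff supp_fun_def)
qed

lemma conv_eq_ma_monomD:
  assumes f: "finite (supp_fun f)" and g: "finite (supp_fun g)"
    and fg: "conv f g = ma_monom c m" and "c \<noteq> 0"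
  shows "\<exists>d a. d \<noteq> 0 \<and> f = ma_monom d a" "\<exists>d a. d \<noteq> 0 \<and> g = ma_monom d a"
proof -
  have "conv f g m \<noteq> 0" using fg \<open>c \<noteq> 0\<close> by (simp add: ma_monom_def)
  then obtain s where "f s * g (m - s) \<noteq> 0" unfolding conv_def by (meson sum.neutral)
  then have nf: "supp_fun f \<noteq> {}" and ng: "supp_fun g \<noteq> {}" by (auto simp: supp_fun_def)
  let ?Af = "Max (supp_fun f)" and ?Ag = "Max (supp_fun g)"
  let ?af = "Min (supp_fun f)" and ?ag = "Min (supp_fun g)"
  have nz: "f ?Af \<noteq> 0" "g ?Ag \<noteq> 0" "f ?af \<noteq> 0" "g ?ag \<noteq> 0"
    using nf ng f g Max_in Min_in by (auto simp: supp_fun_def)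
  have "conv f g (?Af + ?Ag) \<noteq> 0" "conv f g (?af + ?ag) \<noteq> 0"
    using conv_Max_Max[OF f g nf ng] conv_Min_Min[OF f g nf ng] nz by simp_all
  then have "?Af + ?Ag = m" "?af + ?ag = m"
    using fg by (auto simp: ma_monom_def split: if_splits)
  moreover have "?af \<le> ?Af" "?ag \<le> ?Ag" using nf ng f g by auto
  ultimately have "?af = ?Af" "?ag = ?Ag" by linarith+
  then show "\<exists>d a. d \<noteq> 0 \<and> f = ma_monom d a" "\<exists>d a. d \<noteq> 0 \<and> g = ma_monom d a"
    using eq_ma_monom_if_Min_eq_Max[OF f nf] eq_ma_monom_if_Min_eq_Max[OF g ng] nz by blast+
qed

subsection \<open>Units and irreducible monomials\<close>

lemma Units_monoid_algebra:
  fixes x :: "rat \<Rightarrow> 'a::field"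
  assumes M: "puiseux_monoid M" and x: "x \<in> Units (monoid_algebra M)"
  shows "\<exists>d. d \<noteq> 0 \<and> x = ma_monom d 0"
proof -
  obtain y where y: "x \<in> carrier (monoid_algebra M)" "y \<in> carrier (monoid_algebra M)"
    and xy: "conv x y = ma_monom (1::'a) 0"
    using x unfolding Units_def by (auto simp: monoid_algebra_simps)
  obtain d a where da: "d \<noteq> 0" "x = ma_monom d a"
    using conv_eq_ma_monomD(1)[OF _ _ xy] y by (auto simp: carrier_monoid_algebra)
  obtain e b where eb: "e \<noteq> 0" "y = ma_monom e b"
    using conv_eq_ma_monomD(2)[OF _ _ xy] y by (auto simp: carrier_monoid_algebra)
  have "a + b = 0"
    using xy da eb ma_monom_eq_iff[of "d * e"] by (simp add: conv_ma_monom)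
  moreover have "0 \<le> a" "0 \<le> b"
    using y da eb M by (auto simp: ma_monom_in_carrier_iff nonneg_of_puiseux_monoid)
  ultimately have "a = 0" by linarith
  with da show ?thesis by blast
qed

lemma ma_monom_in_Units_iff:
  fixes d :: "'a::field"
  assumes M: "puiseux_monoid M" and "d \<noteq> 0"
  shows "ma_monom d a \<in> Units (monoid_algebra M) \<longleftrightarrow> a = 0"
proof
  show "ma_monom d a \<in> Units (monoid_algebra M) \<Longrightarrow> a = 0"
    using Units_monoid_algebra[OF M] ma_monom_eq_iff[OF \<open>d \<noteq> 0\<close>] by metis
  assume "a = 0"
  have "0 \<in> M" using M by (simp add: puiseux_monoid_def)
  then have "ma_monom d 0 \<in> carrier (monoid_algebra M)" "ma_monom (1/d) 0 \<in> carrier (monoid_algebra M)"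
    by (simp_all add: ma_monom_in_carrier_iff)
  moreover have "conv (ma_monom (1/d) 0) (ma_monom d 0) = ma_monom 1 0"
    "conv (ma_monom d 0) (ma_monom (1/d) 0) = ma_monom 1 0"
    using \<open>d \<noteq> 0\<close> by (simp_all add: conv_ma_monom)
  ultimately show "ma_monom d a \<in> Units (monoid_algebra M)"
    unfolding \<open>a = 0\<close> Units_def monoid_algebra_simps by blast
qed

lemma ring_irreducible_ma_monom_iff:
  fixes d :: "'a::field"
  assumes M: "puiseux_monoid M" and dom: "domain (monoid_algebra M :: (rat \<Rightarrow> 'a) ring)"
    and "d \<noteq> 0" and aM: "a \<in> M"
  shows "ring_irreducible\<^bsub>monoid_algebra M\<^esub> (ma_monom d a) \<longleftrightarrow> atom M a"
proof
  assume irr: "ring_irreducible\<^bsub>monoid_algebra M\<^esub> (ma_monom d a)"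
  have carr: "ma_monom d a \<in> carrier (monoid_algebra M)" using aM by (simp add: ma_monom_in_carrier_iff)
  note E = domain.ring_irreducibleE[OF dom carr irr]
  have "b = 0 \<or> c = 0" if "b \<in> M" "c \<in> M" "a = b + c" for b c
  proof -
    have "ma_monom d a = ma_monom d b \<otimes>\<^bsub>monoid_algebra M\<^esub> ma_monom 1 c"
      using that by (simp add: monoid_algebra_simps conv_ma_monom)
    then have "ma_monom d b \<in> Units (monoid_algebra M) \<or> ma_monom (1::'a) c \<in> Units (monoid_algebra M)"
      using E(5) that ma_monom_in_carrier_iff by metis
    then show ?thesis using ma_monom_in_Units_iff[OF M] \<open>d \<noteq> 0\<close> by auto
  qed
  moreover have "a \<noteq> 0" using E(4) ma_monom_in_Units_iff[OF M \<open>d \<noteq> 0\<close>] by auto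
  ultimately show "atom M a" using aM by (auto simp: atom_def)
next
  assume a: "atom M a"
  show "ring_irreducible\<^bsub>monoid_algebra M\<^esub> (ma_monom d a)"
  proof (rule domain.ring_irreducibleI[OF dom])
    show "ma_monom d a \<in> carrier (monoid_algebra M) - {\<zero>\<^bsub>monoid_algebra M\<^esub>}"
      using aM \<open>d \<noteq> 0\<close> ma_monom_in_carrier_iff[of d a M]
      by (auto simp: monoid_algebra_simps ma_monom_def fun_eq_iff)
    show "ma_monom d a \<notin> Units (monoid_algebra M)"
      using a ma_monom_in_Units_iff[OF M \<open>d \<noteq> 0\<close>] by (auto simp: atom_def)
    fix x y :: "rat \<Rightarrow> 'a"
    assume xy: "x \<in> carrier (monoid_algebra M)" "y \<in> carrier (monoid_algebra M)"
      "ma_monom d a = x \<otimes>\<^bsub>monoid_algebra M\<^esub> y"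
    then have c: "conv x y = ma_monom d a" by (simp add: monoid_algebra_simps)
    obtain e b where eb: "e \<noteq> 0" "x = ma_monom e b"
      using conv_eq_ma_monomD(1)[OF _ _ c \<open>d \<noteq> 0\<close>] xy by (auto simp: carrier_monoid_algebra)
    obtain e' b' where eb': "e' \<noteq> 0" "y = ma_monom e' b'"
      using conv_eq_ma_monomD(2)[OF _ _ c \<open>d \<noteq> 0\<close>] xy by (auto simp: carrier_monoid_algebra)
    have "a = b + b'"
      using c eb eb' ma_monom_eq_iff[OF \<open>d \<noteq> 0\<close>] by (metis conv_ma_monom)
    moreover have "b \<in> M" "b' \<in> M" using xy eb eb' ma_monom_in_carrier_iff by metis+
    ultimately have "b = 0 \<or> b' = 0" using a by (auto simp: atom_def)
    then show "x \<in> Units (monoid_algebra M) \<or> y \<in> Units (monoid_algebra M)"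
      using eb eb' ma_monom_in_Units_iff[OF M] by auto
  qed
qed

subsection \<open>Half-factoriality forces a cyclic monoid\<close>

lemma ma_monom_factors:
  fixes fs :: "(rat \<Rightarrow> 'a::field) list"
  assumes dom: "domain (monoid_algebra M :: (rat \<Rightarrow> 'a) ring)"
  shows "set fs \<subseteq> carrier (monoid_algebra M) \<Longrightarrow>
    foldr (\<otimes>\<^bsub>monoid_algebra M\<^esub>) fs \<one>\<^bsub>monoid_algebra M\<^esub> = ma_monom c m \<Longrightarrow> c \<noteq> 0 \<Longrightarrow>
    \<forall>x\<in>set fs. \<exists>d a. d \<noteq> 0 \<and> x = ma_monom d a"
proof (induction fs arbitrary: c m)
  case Nil
  then show ?case by simp
next
  case (Cons x xs)
  interpret domain "monoid_algebra M :: (rat \<Rightarrow> 'a) ring" by (fact dom)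
  let ?p = "foldr (\<otimes>\<^bsub>monoid_algebra M\<^esub>) xs \<one>\<^bsub>monoid_algebra M\<^esub>"
  have "x \<in> carrier (monoid_algebra M)" "?p \<in> carrier (monoid_algebra M)"
    using Cons.prems(1) by auto
  then have fin: "finite (supp_fun x)" "finite (supp_fun ?p)" by (auto simp: carrier_monoid_algebra)
  have c: "conv x ?p = ma_monom c m"
    using Cons.prems(2) by (simp add: monoid_algebra_simps)
  obtain e b where "e \<noteq> 0" "?p = ma_monom e b"
    using conv_eq_ma_monomD(2)[OF fin c Cons.prems(3)] by blast
  then have "\<forall>y\<in>set xs. \<exists>d a. d \<noteq> 0 \<and> y = ma_monom d a"
    using Cons.IH Cons.prems(1) by auto
  then show ?case using conv_eq_ma_monomD(1)[OF fin c Cons.prems(3)] by auto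
qed

lemma foldr_ma_monom:
  "foldr (\<otimes>\<^bsub>monoid_algebra M\<^esub>) (map (case_prod ma_monom) ps) \<one>\<^bsub>monoid_algebra M\<^esub>
     = ma_monom (prod_list (map fst ps)) (sum_list (map snd ps))"
  by (induction ps) (auto simp: monoid_algebra_simps conv_ma_monom)

lemma sum_list_atoms:
  assumes M: "puiseux_monoid M" and at: "atomic_domain (monoid_algebra M :: (rat \<Rightarrow> 'a::field) ring)"
    and m: "m \<in> M" "m \<noteq> 0"
  shows "\<exists>as. set as \<subseteq> Collect (atom M) \<and> sum_list as = m"
proof -
  let ?R = "monoid_algebra M :: (rat \<Rightarrow> 'a) ring"
  have dom: "domain ?R" using at by (simp add: atomic_domain_def)
  have "ma_monom (1::'a) m \<in> carrier ?R" "ma_monom (1::'a) m \<noteq> \<zero>\<^bsub>?R\<^esub>" "ma_monom (1::'a) m \<notin> Units ?R"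
    using m ma_monom_in_carrier_iff ma_monom_in_Units_iff[OF M, of "1::'a"]
    by (auto simp: monoid_algebra_simps ma_monom_def fun_eq_iff)
  then obtain fs where fs: "set fs \<subseteq> carrier ?R" "\<forall>x\<in>set fs. ring_irreducible\<^bsub>?R\<^esub> x"
    "foldr (\<otimes>\<^bsub>?R\<^esub>) fs \<one>\<^bsub>?R\<^esub> = ma_monom 1 m"
    using at unfolding atomic_domain_def by blast
  have "\<forall>x\<in>set fs. \<exists>p. x = case_prod ma_monom p \<and> atom M (snd p)"
  proof
    fix x assume x: "x \<in> set fs"
    then obtain d a where "d \<noteq> 0" "x = ma_monom d a"
      using ma_monom_factors[OF dom fs(1,3)] by fastforce
    moreover from calculation have "atom M a"
      using ring_irreducible_ma_monom_iff[OF M dom] fs(1,2) x ma_monom_in_carrier_iff by blast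
    ultimately show "\<exists>p. x = case_prod ma_monom p \<and> atom M (snd p)" by auto
  qed
  then obtain pick where pick: "\<forall>x\<in>set fs. x = case_prod ma_monom (pick x) \<and> atom M (snd (pick x))"
    by metis
  define ps where "ps = map pick fs"
  have "fs = map (case_prod ma_monom) ps"
    unfolding ps_def map_map using pick by (simp add: map_idI)
  then have "ma_monom (prod_list (map fst ps)) (sum_list (map snd ps)) = ma_monom 1 m"
    using fs(3) foldr_ma_monom by metis
  then have "sum_list (map snd ps) = m"
    by (metis ma_monom_eq_iff zero_neq_one)
  moreover have "set (map snd ps) \<subseteq> Collect (atom M)" using pick by (auto simp: ps_def)
  ultimately show ?thesis by blast
qed

lemma foldr_replicate_ma_monom:
  "foldr (\<otimes>\<^bsub>monoid_algebra M\<^esub>) (replicate k (ma_monom 1 a)) \<one>\<^bsub>monoid_algebra M\<^esub>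
     = ma_monom (1::'a::field) (of_nat k * a)"
  using foldr_ma_monom[of M "replicate k (1::'a, a)"] by (simp add: sum_list_replicate)

lemma positive_rats_commensurable:
  fixes a b :: rat
  assumes "0 < a" "0 < b"
  obtains k n :: nat where "0 < k" "0 < n" "of_nat n * b = of_nat k * a"
proof -
  obtain k n where "quotient_of (b / a) = (k, n)" by (cases "quotient_of (b / a)")
  then have q: "b / a = of_int k / of_int n" and "0 < n"
    using quotient_of_div quotient_of_denom_pos by blast+
  moreover have "0 < b / a" using assms by simp
  ultimately have "0 < k" by (simp add: zero_less_divide_iff)
  have "of_int n * b = of_int k * a" using q \<open>0 < n\<close> assms by (simp add: field_simps)
  then show ?thesis
    using that[of "nat k" "nat n"] \<open>0 < k\<close> \<open>0 < n\<close> by simp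
qed

lemma atom_unique:
  assumes M: "puiseux_monoid M"
    and hf: "half_factorial (monoid_algebra M :: (rat \<Rightarrow> 'a::field) ring)"
    and a: "atom M a" and b: "atom M b"
  shows "a = b"
proof -
  let ?R = "monoid_algebra M :: (rat \<Rightarrow> 'a) ring"
  have dom: "domain ?R" using hf by (simp add: half_factorial_def atomic_domain_def)
  have "0 < a" "0 < b" using a b M by (auto simp: atom_def dest: nonneg_of_puiseux_monoid)
  then obtain k n :: nat where kn: "0 < k" "0 < n" "of_nat n * b = of_nat k * a"
    by (rule positive_rats_commensurable)
  let ?fs = "replicate k (ma_monom (1::'a) a)" and ?gs = "replicate n (ma_monom (1::'a) b)"
  have "foldr (\<otimes>\<^bsub>?R\<^esub>) ?fs \<one>\<^bsub>?R\<^esub> = foldr (\<otimes>\<^bsub>?R\<^esub>) ?gs \<one>\<^bsub>?R\<^esub>"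
    unfolding foldr_replicate_ma_monom kn(3) ..
  moreover have "set ?fs \<subseteq> carrier ?R" "set ?gs \<subseteq> carrier ?R"
    using a b by (auto simp: atom_def ma_monom_in_carrier_iff)
  moreover have "\<forall>x\<in>set ?fs. ring_irreducible\<^bsub>?R\<^esub> x" "\<forall>x\<in>set ?gs. ring_irreducible\<^bsub>?R\<^esub> x"
    using a b ring_irreducible_ma_monom_iff[OF M dom] by (auto simp: atom_def)
  ultimately have "length ?fs = length ?gs" using hf unfolding half_factorial_def by blast
  then have "k = n" by simp
  then show ?thesis using kn by simp
qed

lemma half_factorial_imp_multiples:
  assumes M: "puiseux_monoid M" and "M \<noteq> {0}"
    and hf: "half_factorial (monoid_algebra M :: (rat \<Rightarrow> 'a::field) ring)"
  shows "\<exists>a>0. M = range (\<lambda>n. of_nat n * a)"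
proof -
  have at: "atomic_domain (monoid_algebra M :: (rat \<Rightarrow> 'a) ring)"
    using hf by (simp add: half_factorial_def)
  have "0 \<in> M" using M by (simp add: puiseux_monoid_def)
  then obtain m where "m \<in> M" "m \<noteq> 0" using \<open>M \<noteq> {0}\<close> by blast
  then obtain as where "set as \<subseteq> Collect (atom M)" "sum_list as = m"
    using sum_list_atoms[OF M at] by blast
  with \<open>m \<noteq> 0\<close> obtain a where a: "atom M a" by (cases as) auto
  have "M = range (\<lambda>n. of_nat n * a)"
  proof (intro equalityI subsetI)
    fix x assume "x \<in> M"
    show "x \<in> range (\<lambda>n. of_nat n * a)"
    proof (cases "x = 0")
      case False
      then obtain as where as: "set as \<subseteq> Collect (atom M)" "sum_list as = x"
        using sum_list_atoms[OF M at \<open>x \<in> M\<close>] by blast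
      then have "replicate (length as) a = as"
        using atom_unique[OF M hf] a by (auto intro: replicate_length_same)
      then have "x = of_nat (length as) * a"
        using as(2) sum_list_replicate by metis
      then show ?thesis by blast
    qed (auto intro: image_eqI[of _ _ 0])
  next
    fix x assume "x \<in> range (\<lambda>n. of_nat n * a)"
    then obtain n where "x = of_nat n * a" by blast
    moreover have "of_nat n * a \<in> M" for n
      by (induction n) (use \<open>0 \<in> M\<close> a M in \<open>auto simp: atom_def puiseux_monoid_def algebra_simps\<close>)
    ultimately show "x \<in> M" by simp
  qed
  moreover have "0 < a" using a M by (auto simp: atom_def dest: nonneg_of_puiseux_monoid)
  ultimately show ?thesis by blast
qed

subsection \<open>The algebra of a cyclic monoid is a polynomial ring\<close>

definition ma_to_poly :: "rat \<Rightarrow> (rat \<Rightarrow> 'a::field) \<Rightarrow> 'a poly" where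
  "ma_to_poly a f = Abs_poly (\<lambda>n. f (of_nat n * a))"

lemma finite_supp_conv:
  assumes "finite (supp_fun f)" "finite (supp_fun g)"
  shows "finite (supp_fun (conv f g))"
proof (rule finite_subset)
  show "supp_fun (conv f g) \<subseteq> (\<lambda>(s, t). s + t) ` (supp_fun f \<times> supp_fun g)"
  proof
    fix u assume "u \<in> supp_fun (conv f g)"
    then have "(\<Sum>s\<in>supp_fun f. f s * g (u - s)) \<noteq> 0" by (simp add: supp_fun_def conv_def)
    then obtain s where "s \<in> supp_fun f" "f s * g (u - s) \<noteq> 0" by (meson sum.neutral)
    then have "(s, u - s) \<in> supp_fun f \<times> supp_fun g" by (auto simp: supp_fun_def)
    then show "u \<in> (\<lambda>(s, t). s + t) ` (supp_fun f \<times> supp_fun g)" by force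
  qed
qed (use assms in simp)

lemma vanishes_outside_monoid: "f \<in> carrier (monoid_algebra M) \<Longrightarrow> x \<notin> M \<Longrightarrow> f x = 0"
  by (auto simp: carrier_monoid_algebra supp_fun_def)

context
  fixes a :: rat and M :: "rat set"
  assumes pos: "0 < a" and M_eq: "M = range (\<lambda>n. of_nat n * a)"
begin

lemma coeff_ma_to_poly:
  assumes "finite (supp_fun f)"
  shows "Polynomial.coeff (ma_to_poly a f) = (\<lambda>n. f (of_nat n * a))"
proof -
  have "inj (\<lambda>n::nat. of_nat n * a)" using pos by (auto simp: inj_def)
  then have "finite ((\<lambda>n::nat. of_nat n * a) -` supp_fun f)"
    using finite_vimageI assms by blast
  then obtain N where "\<forall>i\<in>(\<lambda>n::nat. of_nat n * a) -` supp_fun f. i < N"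
    by (auto simp: finite_nat_set_iff_bounded)
  then have "f (of_nat i * a) = 0" if "i > N" for i
    using that by (auto simp: supp_fun_def)
  then show ?thesis unfolding ma_to_poly_def by (rule coeff_Abs_poly)
qed

lemma ma_to_poly_conv:
  assumes f: "f \<in> carrier (monoid_algebra M)" and g: "g \<in> carrier (monoid_algebra M)"
  shows "ma_to_poly a (conv f g) = ma_to_poly a f * ma_to_poly a (g :: rat \<Rightarrow> 'a::field)"
proof (rule poly_eqI)
  fix k
  let ?e = "\<lambda>n::nat. of_nat n * a"
  let ?I = "{i. f (?e i) \<noteq> 0}"
  let ?F = "\<lambda>i. f (?e i) * g (?e k - ?e i)"
  have fin: "finite (supp_fun f)" "finite (supp_fun g)" using f g by (auto simp: carrier_monoid_algebra)
  have inj: "inj ?e" using pos by (auto simp: inj_def)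
  have supp_f: "supp_fun f = ?e ` ?I"
    using f M_eq by (auto simp: carrier_monoid_algebra supp_fun_def)
  have fin_I: "finite ?I" using finite_vimageI[OF fin(1) inj] by (simp add: supp_fun_def vimage_def)
  have "Polynomial.coeff (ma_to_poly a (conv f g)) k = (\<Sum>s\<in>supp_fun f. f s * g (?e k - s))"
    using coeff_ma_to_poly[OF finite_supp_conv[OF fin]] by (simp add: conv_def)
  also have "\<dots> = (\<Sum>i\<in>?I. ?F i)"
    unfolding supp_f by (simp add: sum.reindex inj_on_subset[OF inj])
  also have "\<dots> = (\<Sum>i\<le>k. ?F i)"
  proof (rule sum.mono_neutral_cong)
    show "?F i = 0" if "i \<in> {..k} - ?I" for i using that by simp
    show "?F i = 0" if "i \<in> ?I - {..k}" for i
    proof -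
      from that have "?e k - ?e i < 0" using pos by (simp add: mult_strict_right_mono)
      moreover have "0 \<le> x" if "x \<in> M" for x using that M_eq pos by auto
      ultimately have "?e k - ?e i \<notin> M" by fastforce
      then show ?thesis using vanishes_outside_monoid[OF g] by simp
    qed
  qed (use fin_I in auto)
  also have "\<dots> = (\<Sum>i\<le>k. Polynomial.coeff (ma_to_poly a f) i * Polynomial.coeff (ma_to_poly a g) (k - i))"
    by (rule sum.cong) (auto simp: coeff_ma_to_poly fin of_nat_diff left_diff_distrib)
  also have "\<dots> = Polynomial.coeff (ma_to_poly a f * ma_to_poly a g) k"
    by (simp add: coeff_mult)
  finally show "Polynomial.coeff (ma_to_poly a (conv f g)) k = Polynomial.coeff (ma_to_poly a f * ma_to_poly a g) k" .
qed

lemma ma_to_poly_add: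
  assumes "finite (supp_fun f)" "finite (supp_fun g)"
  shows "ma_to_poly a (\<lambda>s. f s + g s) = ma_to_poly a f + ma_to_poly a (g :: rat \<Rightarrow> 'a::field)"
proof -
  have "finite (supp_fun (\<lambda>s. f s + g s))"
    by (rule finite_subset[of _ "supp_fun f \<union> supp_fun g"]) (use assms in \<open>auto simp: supp_fun_def\<close>)
  then show ?thesis by (simp add: poly_eq_iff coeff_ma_to_poly assms)
qed

lemma ma_to_poly_ma_monom_0: "ma_to_poly a (ma_monom c 0) = [:c:]"
proof -
  have "Polynomial.coeff (ma_to_poly a (ma_monom c 0)) = (\<lambda>n. ma_monom c 0 (of_nat n * a))"
    by (rule coeff_ma_to_poly) (simp add: supp_ma_monom)
  then have "Polynomial.coeff (ma_to_poly a (ma_monom c 0)) n = Polynomial.coeff [:c:] n" for n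
    using pos by (cases n) (simp_all add: ma_monom_def)
  then show ?thesis by (simp add: poly_eq_iff)
qed

lemma inj_on_ma_to_poly: "inj_on (ma_to_poly a) (carrier (monoid_algebra M :: (rat \<Rightarrow> 'a::field) ring))"
proof
  fix f g :: "rat \<Rightarrow> 'a"
  assume f: "f \<in> carrier (monoid_algebra M)" and g: "g \<in> carrier (monoid_algebra M)"
    and eq: "ma_to_poly a f = ma_to_poly a g"
  have "f s = g s" for s
  proof (cases "s \<in> M")
    case True
    then obtain n where "s = of_nat n * a" using M_eq by blast
    then show ?thesis
      using arg_cong[OF eq, of "\<lambda>p. Polynomial.coeff p n"] f g
      by (simp add: coeff_ma_to_poly carrier_monoid_algebra)
  qed (simp add: vanishes_outside_monoid[OF f] vanishes_outside_monoid[OF g])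
  then show "f = g" ..
qed

lemma in_image_ma_to_poly: "(p :: 'a::field poly) \<in> ma_to_poly a ` carrier (monoid_algebra M)"
proof -
  let ?e = "\<lambda>n::nat. of_nat n * a"
  define f :: "rat \<Rightarrow> 'a" where "f = (\<lambda>s. if s \<in> M then Polynomial.coeff p (nat \<lfloor>s / a\<rfloor>) else 0)"
  have f_e: "f (?e n) = Polynomial.coeff p n" for n
    using pos M_eq by (auto simp: f_def)
  have "supp_fun f \<subseteq> ?e ` {..Polynomial.degree p}"
  proof
    fix s assume s: "s \<in> supp_fun f"
    then obtain n where n: "s = ?e n" using M_eq by (auto simp: supp_fun_def f_def split: if_splits)
    then have "n \<le> Polynomial.degree p" using s f_e by (auto simp: supp_fun_def intro: le_degree)
    then show "s \<in> ?e ` {..Polynomial.degree p}" using n by blast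
  qed
  then have "finite (supp_fun f)" by (rule finite_subset) simp
  moreover have "supp_fun f \<subseteq> M" by (auto simp: supp_fun_def f_def split: if_splits)
  ultimately have "f \<in> carrier (monoid_algebra M)" by (simp add: carrier_monoid_algebra)
  moreover have "ma_to_poly a f = p"
    using \<open>finite (supp_fun f)\<close> by (simp add: poly_eq_iff coeff_ma_to_poly f_e)
  ultimately show ?thesis by blast
qed

lemma ma_to_poly_in_alg_iso_MX: "(ma_to_poly a :: (rat \<Rightarrow> 'a::field) \<Rightarrow> 'a poly) \<in> alg_iso_MX M"
proof -
  let ?R = "monoid_algebra M :: (rat \<Rightarrow> 'a) ring"
  have "ma_to_poly a \<in> ring_hom ?R poly_ring"
  proof (rule ring_hom_memI)
    fix x y assume "x \<in> carrier ?R" "y \<in> carrier ?R"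
    then show "ma_to_poly a (x \<otimes>\<^bsub>?R\<^esub> y) = ma_to_poly a x \<otimes>\<^bsub>poly_ring\<^esub> ma_to_poly a y"
      and "ma_to_poly a (x \<oplus>\<^bsub>?R\<^esub> y) = ma_to_poly a x \<oplus>\<^bsub>poly_ring\<^esub> ma_to_poly a y"
      by (simp_all add: monoid_algebra_simps poly_ring_def ma_to_poly_conv ma_to_poly_add carrier_monoid_algebra)
  qed (simp_all add: poly_ring_def monoid_algebra_simps ma_to_poly_ma_monom_0 one_pCons)
  moreover have "ma_to_poly a ` carrier ?R = carrier poly_ring"
    using in_image_ma_to_poly by (auto simp: poly_ring_def)
  ultimately show ?thesis
    using inj_on_ma_to_poly
    by (simp add: alg_iso_MX_def ring_iso_def bij_betw_def poly_ring_def ma_const_eq_ma_monom ma_to_poly_ma_monom_0)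
qed

end

lemma alg_iso_MM_via_poly_ring:
  fixes \<phi> \<psi> :: "(rat \<Rightarrow> 'a::field) \<Rightarrow> 'a poly"
  assumes R': "ring (monoid_algebra M' :: (rat \<Rightarrow> 'a) ring)" and "0 \<in> M'"
    and \<phi>: "\<phi> \<in> alg_iso_MX M" and \<psi>: "\<psi> \<in> alg_iso_MX M'"
  shows "inv_into (carrier (monoid_algebra M')) \<psi> \<circ> \<phi> \<in> alg_iso_MM M M'"
proof -
  have iso: "\<phi> \<in> ring_iso (monoid_algebra M) poly_ring" "\<psi> \<in> ring_iso (monoid_algebra M') poly_ring"
    using \<phi> \<psi> by (simp_all add: alg_iso_MX_def)
  have "inv_into (carrier (monoid_algebra M')) \<psi> (\<phi> (ma_const c)) = ma_const c" for c
  proof -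
    have "ma_const c \<in> carrier (monoid_algebra M')"
      using \<open>0 \<in> M'\<close> by (simp add: ma_const_eq_ma_monom ma_monom_in_carrier_iff)
    moreover have "inj_on \<psi> (carrier (monoid_algebra M'))"
      using iso(2) by (simp add: ring_iso_def bij_betw_def)
    moreover have "\<phi> (ma_const c) = \<psi> (ma_const c)"
      using \<phi> \<psi> by (simp add: alg_iso_MX_def)
    ultimately show ?thesis by simp
  qed
  then show ?thesis
    using ring_iso_set_trans[OF iso(1) ring_iso_set_sym[OF R' iso(2)]] by (simp add: alg_iso_MM_def)
qed

theorem mainTheorem9:
  fixes M M' :: "rat set"
  assumes "puiseux_monoid M" and "puiseux_monoid M'"
    and "M \<noteq> {0}" and "M' \<noteq> {0}"
    and "half_factorial (monoid_algebra M :: (rat \<Rightarrow> 'a::field) ring)"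
    and "half_factorial (monoid_algebra M' :: (rat \<Rightarrow> 'a) ring)"
  shows "(alg_iso_MM M M' :: ((rat \<Rightarrow> 'a) \<Rightarrow> (rat \<Rightarrow> 'a)) set) \<noteq> {}
       \<and> (alg_iso_MX M :: ((rat \<Rightarrow> 'a) \<Rightarrow> 'a poly) set) \<noteq> {}
       \<and> (alg_iso_MX M' :: ((rat \<Rightarrow> 'a) \<Rightarrow> 'a poly) set) \<noteq> {}"
proof -
  obtain a where "0 < a" "M = range (\<lambda>n. of_nat n * a)"
    using half_factorial_imp_multiples[OF assms(1,3,5)] by blast
  then have \<phi>: "(ma_to_poly a :: (rat \<Rightarrow> 'a) \<Rightarrow> 'a poly) \<in> alg_iso_MX M"
    by (rule ma_to_poly_in_alg_iso_MX)
  obtain b where "0 < b" "M' = range (\<lambda>n. of_nat n * b)"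
    using half_factorial_imp_multiples[OF assms(2,4,6)] by blast
  then have \<psi>: "(ma_to_poly b :: (rat \<Rightarrow> 'a) \<Rightarrow> 'a poly) \<in> alg_iso_MX M'"
    by (rule ma_to_poly_in_alg_iso_MX)
  have "ring (monoid_algebra M' :: (rat \<Rightarrow> 'a) ring)"
    using assms(6) by (simp add: half_factorial_def atomic_domain_def domain.axioms(1) cring.axioms(1))
  moreover have "0 \<in> M'" using assms(2) by (simp add: puiseux_monoid_def)
  ultimately show ?thesis
    using alg_iso_MM_via_poly_ring[OF _ _ \<phi> \<psi>] \<phi> \<psi> by blast
qed

end
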